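(* Let $f(\alpha,\beta)$ and $h(\alpha)$ be functions with $f(\alpha,\beta)=-f(\beta,\alpha)$ for all $\alpha,\beta$. If for all $\alpha,\beta,\gamma$ $$f(\alpha,\beta)h(\alpha)h(\beta)+f(\beta,\gamma)h(\beta)h(\gamma)+f(\gamma,\alpha)h(\gamma)h(\alpha)=f(\alpha,\beta)f(\beta,\gamma)f(\gamma,\alpha),$$ then for all $\alpha,\beta,\gamma,\delta$ $$f(\alpha,\beta)f(\beta,\gamma)f(\gamma,\alpha)+f(\beta,\alpha)f(\alpha,\delta)f(\delta,\beta)+f(\gamma,\beta)f(\beta,\delta)f(\delta,\gamma)+f(\alpha,\gamma)f(\gamma,\delta)f(\delta,\alpha)=0.$$ Conversely, if the latter four-term identity holds for all $\alpha,\beta,\gamma,\delta$, then the former three-term identity holds with $h(\alpha)=if(\alpha,\delta)$, for any fixed $\delta$. *)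

theory Defs
  imports Complex_Main
begin

end

theory Submission
  imports Defs
begin

text \<open>Read \<open>f\<close> as an antisymmetric weight on the edges of a tetrahedron with vertices
  \<alpha>, \<beta>, \<gamma>, \<delta>. The four-term identity sums the cyclic products \<open>f\<close> over its four faces, each
  face oriented so that every edge is traversed once in each direction. Replacing each cyclic
  product by its three-term expression in \<open>h\<close> therefore produces every edge term twice with
  opposite signs. Conversely, for \<open>h \<alpha> = \<i> f \<alpha> \<delta>\<close> the three-term expression on the face
  \<alpha>\<beta>\<gamma> is minus the sum of the cyclic products over the other three faces.\<close>

definition cycle_prod :: "('a \<Rightarrow> 'a \<Rightarrow> 'r::comm_ring_1) \<Rightarrow> 'a \<Rightarrow> 'a \<Rightarrow> 'a \<Rightarrow> 'r" where
  "cycle_prod f a b c = f a b * f b c * f c a"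

definition triangle_sum ::
    "('a \<Rightarrow> 'a \<Rightarrow> 'r::comm_ring_1) \<Rightarrow> ('a \<Rightarrow> 'r) \<Rightarrow> 'a \<Rightarrow> 'a \<Rightarrow> 'a \<Rightarrow> 'r" where
  "triangle_sum f h a b c = f a b * h a * h b + f b c * h b * h c + f c a * h c * h a"

definition tetrahedron_sum :: "('a \<Rightarrow> 'a \<Rightarrow> 'r::comm_ring_1) \<Rightarrow> 'a \<Rightarrow> 'a \<Rightarrow> 'a \<Rightarrow> 'a \<Rightarrow> 'r" where
  "tetrahedron_sum f a b c d =
     cycle_prod f a b c + cycle_prod f b a d + cycle_prod f c b d + cycle_prod f a c d"

lemma triangle_sums_over_tetrahedron_cancel:
  fixes f :: "'a \<Rightarrow> 'a \<Rightarrow> 'r::comm_ring_1"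
  assumes antisym: "\<And>x y. f x y = - f y x"
  shows "triangle_sum f h a b c + triangle_sum f h b a d + triangle_sum f h c b d
           + triangle_sum f h a c d = 0"
  unfolding triangle_sum_def
  using antisym[of b a] antisym[of d b] antisym[of c b] antisym[of d c]
    antisym[of c a] antisym[of d a]
  by (simp add: algebra_simps)

lemma tetrahedron_sum_eq_0_if_triangle_sums:
  fixes f :: "'a \<Rightarrow> 'a \<Rightarrow> 'r::comm_ring_1"
  assumes antisym: "\<And>x y. f x y = - f y x"
    and triangle: "\<And>x y z. triangle_sum f h x y z = cycle_prod f x y z"
  shows "tetrahedron_sum f a b c d = 0"
  using triangle_sums_over_tetrahedron_cancel
      [where f = f and h = h and a = a and b = b and c = c and d = d, OF antisym]
  by (simp add: tetrahedron_sum_def triangle)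

lemma triangle_sum_apex:
  fixes f :: "'a \<Rightarrow> 'a \<Rightarrow> 'r::comm_ring_1"
  assumes antisym: "\<And>x y. f x y = - f y x"
    and i: "i * i = -1"
  shows "triangle_sum f (\<lambda>x. i * f x d) a b c = cycle_prod f a b c - tetrahedron_sum f a b c d"
proof -
  have i_squared: "z * (i * x) * (i * y) = - (z * x * y)" for x y z
  proof -
    have "z * (i * x) * (i * y) = (i * i) * (z * x * y)"
      by (simp add: ac_simps)
    then show ?thesis
      by (simp add: i)
  qed
  have "triangle_sum f (\<lambda>x. i * f x d) a b c
          = - (f a b * f a d * f b d + f b c * f b d * f c d + f c a * f c d * f a d)"
    unfolding triangle_sum_def i_squared by simp
  also have "\<dots> = cycle_prod f a b c - tetrahedron_sum f a b c d"
    unfolding tetrahedron_sum_def cycle_prod_def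
    using antisym[of b a] antisym[of d b] antisym[of c b] antisym[of d c]
      antisym[of a c] antisym[of d a]
    by (simp add: algebra_simps)
  finally show ?thesis .
qed

theorem theorem2:
  fixes f :: "'a \<Rightarrow> 'a \<Rightarrow> complex" and h :: "'a \<Rightarrow> complex"
  assumes antisym: "\<And>\<alpha> \<beta>. f \<alpha> \<beta> = - f \<beta> \<alpha>"
  shows "((\<forall>\<alpha> \<beta> \<gamma>.
            f \<alpha> \<beta> * h \<alpha> * h \<beta> + f \<beta> \<gamma> * h \<beta> * h \<gamma> + f \<gamma> \<alpha> * h \<gamma> * h \<alpha>
            = f \<alpha> \<beta> * f \<beta> \<gamma> * f \<gamma> \<alpha>)
          \<longrightarrow> (\<forall>\<alpha> \<beta> \<gamma> \<delta>.
            f \<alpha> \<beta> * f \<beta> \<gamma> * f \<gamma> \<alpha> + f \<beta> \<alpha> * f \<alpha> \<delta> * f \<delta> \<beta>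
            + f \<gamma> \<beta> * f \<beta> \<delta> * f \<delta> \<gamma> + f \<alpha> \<gamma> * f \<gamma> \<delta> * f \<delta> \<alpha> = 0))
       \<and> ((\<forall>\<alpha> \<beta> \<gamma> \<delta>.
            f \<alpha> \<beta> * f \<beta> \<gamma> * f \<gamma> \<alpha> + f \<beta> \<alpha> * f \<alpha> \<delta> * f \<delta> \<beta>
            + f \<gamma> \<beta> * f \<beta> \<delta> * f \<delta> \<gamma> + f \<alpha> \<gamma> * f \<gamma> \<delta> * f \<delta> \<alpha> = 0)
          \<longrightarrow> (\<forall>\<delta>. let h' = (\<lambda>\<alpha>. \<i> * f \<alpha> \<delta>) in
               \<forall>\<alpha> \<beta> \<gamma>.
                 f \<alpha> \<beta> * h' \<alpha> * h' \<beta> + f \<beta> \<gamma> * h' \<beta> * h' \<gamma> + f \<gamma> \<alpha> * h' \<gamma> * h' \<alpha>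
                 = f \<alpha> \<beta> * f \<beta> \<gamma> * f \<gamma> \<alpha>))"
proof -
  have "(\<forall>a b c. triangle_sum f h a b c = cycle_prod f a b c)
          \<longrightarrow> (\<forall>a b c d. tetrahedron_sum f a b c d = 0)"
    using tetrahedron_sum_eq_0_if_triangle_sums[where f = f, OF antisym] by blast
  moreover have "(\<forall>a b c d. tetrahedron_sum f a b c d = 0)
          \<longrightarrow> (\<forall>d a b c. triangle_sum f (\<lambda>x. \<i> * f x d) a b c = cycle_prod f a b c)"
    using triangle_sum_apex[where f = f and i = \<i>, OF antisym] by simp
  ultimately show ?thesis
    unfolding triangle_sum_def tetrahedron_sum_def cycle_prod_def Let_def by blast
qed

end
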